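(* Fix $h>0$. For a positive integer $N_1$ let $N_t=4N_1$ and $$r_t(x) = \frac{xh}{\pi} \sum_{j=1}^{N_t} \frac{1}{\sqrt{jh}} \cdot \frac{e^{\sqrt{jh}-\sqrt{N_t h/4}}}{e^{2\sqrt{jh}-2\sqrt{N_t h/4}} + x}.$$ Let $p_j = -\exp\!\big(-\sigma(\sqrt{N_1}-\sqrt{j}\,)\big)$, $1\le j\le N_1$, with $\sigma = 2\sqrt{h}$. Then there exist coefficients $a_1,\dots,a_{N_1}$ and a polynomial $b$ of degree $N_2=\mathcal{O}(\sqrt{N_1}\,)$ such that the rational function $r(x)=\sum_{j=1}^{N_1}\frac{a_j}{x-p_j}+b(x)$ satisfies $$|r_t(x)-r(x)| = \mathcal{O}\big(e^{-\sqrt{N_t h/4}}\big)$$ as $N_t\to\infty$, uniformly for $x\in[0,1]$. *)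

theory Defs
  imports "HOL-Analysis.Analysis" "HOL-Computational_Algebra.Polynomial"
begin

definition Nt :: "nat \<Rightarrow> nat" where
  "Nt N1 = 4 * N1"

definition r_t :: "real \<Rightarrow> nat \<Rightarrow> real \<Rightarrow> real" where
  "r_t h N1 x = x * h / pi *
     (\<Sum>j=1..Nt N1. (1 / sqrt (real j * h)) *
        (exp (sqrt (real j * h) - sqrt (real (Nt N1) * h / 4)) /
         (exp (2 * sqrt (real j * h) - 2 * sqrt (real (Nt N1) * h / 4)) + x)))"

definition pole :: "real \<Rightarrow> nat \<Rightarrow> nat \<Rightarrow> real" where
  "pole h N1 j = - exp (- (2 * sqrt h) * (sqrt (real N1) - sqrt (real j)))"

definition r_approx :: "real \<Rightarrow> nat \<Rightarrow> (nat \<Rightarrow> real) \<Rightarrow> real poly \<Rightarrow> real \<Rightarrow> real" where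
  "r_approx h N1 a b x = (\<Sum>j=1..N1. a j / (x - pole h N1 j)) + poly b x"

end

theory Submission
  imports Defs
begin

(* With q_j = -p_j = exp(2 sqrt(jh) - 2 sqrt(N_1 h)), the function r_t is a positive
   combination of the fractions x / (x + q_j), j <= 4 N_1. For j <= N_1 each such fraction is a
   constant plus a simple pole at p_j. For j > N_1 we have q_j >= 1, and x / (x + q) is
   approximated on [0,1] by a polynomial of degree n with error at most 3^(-n), because
   x + q ((1 - 2x) / (1 + 2q))^n vanishes at x = -q. The weights are at most sqrt h e^S with
   S = sqrt(N_1 h), so choosing n >= 2S + sqrt N_1 makes the 3 N_1 remaining errors sum to
   O(e^(-S)). *)

definition frac_approx_poly :: "'a::field \<Rightarrow> nat \<Rightarrow> 'a poly" where
  "frac_approx_poly q n = ([:0, 1:] + smult (q / (1 + 2 * q) ^ n) ([:1, -2:] ^ n)) div [:q, 1:]"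

lemma frac_approx_poly_mult:
  fixes q :: "'a::field"
  assumes "1 + 2 * q \<noteq> 0"
  shows "[:q, 1:] * frac_approx_poly q n = [:0, 1:] + smult (q / (1 + 2 * q) ^ n) ([:1, -2:] ^ n)"
    (is "_ = ?M")
proof -
  have "poly ?M (- q) = 0"
    using assms by (simp add: power_divide ac_simps)
  then have "[:q, 1:] dvd ?M"
    using poly_eq_0_iff_dvd[of ?M "- q"] by simp
  then show ?thesis
    unfolding frac_approx_poly_def by (rule dvd_mult_div_cancel)
qed

lemma poly_frac_approx_poly:
  fixes q x :: "'a::field"
  assumes "1 + 2 * q \<noteq> 0"
  shows "poly (frac_approx_poly q n) x * (x + q) = x + q * ((1 - 2 * x) / (1 + 2 * q)) ^ n"
  using arg_cong[OF frac_approx_poly_mult[OF assms, of n], of "\<lambda>p. poly p x"]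
  by (simp add: power_divide algebra_simps)

lemma degree_frac_approx_poly:
  fixes q :: "'a::field"
  assumes "1 + 2 * q \<noteq> 0"
  shows "degree (frac_approx_poly q n) \<le> n"
proof (cases "frac_approx_poly q n = 0")
  case False
  have "degree ([:1, -2:] ^ n :: 'a poly) \<le> n"
    using degree_power_le[of "[:1, -2:] :: 'a poly" n] by (simp split: if_splits)
  then have "degree ([:0, 1:] + smult (q / (1 + 2 * q) ^ n) ([:1, -2:] ^ n)) \<le> max 1 n"
    by (intro degree_add_le) (auto intro: order_trans[OF degree_smult_le])
  moreover have "degree ([:q, 1:] * frac_approx_poly q n) = 1 + degree (frac_approx_poly q n)"
    using False by (subst degree_mult_eq) simp_all
  ultimately show ?thesis
    using frac_approx_poly_mult[OF assms, of n] by simp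
qed simp

lemma frac_approx_poly_error:
  fixes q x :: real
  assumes "1 \<le> q" "0 \<le> x" "x \<le> 1"
  shows "\<bar>x / (x + q) - poly (frac_approx_poly q n) x\<bar> \<le> exp (- real n)"
proof -
  define \<phi> where "\<phi> = ((1 - 2 * x) / (1 + 2 * q)) ^ n"
  have pos: "0 < x + q" using assms by simp
  have "poly (frac_approx_poly q n) x = (x + q * \<phi>) / (x + q)"
    using poly_frac_approx_poly[of q n x] assms pos unfolding \<phi>_def by (simp add: eq_divide_eq)
  then have "\<bar>x / (x + q) - poly (frac_approx_poly q n) x\<bar> = q / (x + q) * \<bar>\<phi>\<bar>"
    using pos assms by (simp add: diff_divide_distrib[symmetric] abs_mult abs_divide)
  also have "\<dots> \<le> \<bar>\<phi>\<bar>"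
    using pos assms by (intro mult_left_le_one_le) simp_all
  also have "\<bar>\<phi>\<bar> \<le> (1 / 3) ^ n"
  proof -
    have "\<bar>1 - 2 * x\<bar> \<le> 1" using assms by simp
    then show ?thesis
      unfolding \<phi>_def power_abs using assms
      by (intro power_mono) (simp_all add: abs_divide divide_le_eq)
  qed
  also have "(1 / 3 :: real) ^ n \<le> exp (- 1) ^ n"
    using exp_le by (intro power_mono) (simp_all add: exp_minus field_simps)
  also have "exp (- 1) ^ n = exp (- real n)"
    by (simp add: exp_of_nat_mult[symmetric])
  finally show ?thesis .
qed

definition pole_weight :: "real \<Rightarrow> nat \<Rightarrow> nat \<Rightarrow> real" where
  "pole_weight h N1 j =
     h / pi / sqrt (real j * h) * exp (sqrt (real j * h) - sqrt (real N1 * h))"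

lemma sqrt_Nt_div_4: "sqrt (real (Nt N1) * h / 4) = sqrt (real N1 * h)"
  by (simp add: Nt_def)

lemma neg_pole_eq:
  assumes "0 \<le> h"
  shows "- pole h N1 j = exp (2 * sqrt (real j * h) - 2 * sqrt (real N1 * h))"
  using assms by (simp add: pole_def real_sqrt_mult algebra_simps)

lemma pole_less_0: "pole h N1 j < 0"
  by (simp add: pole_def)

lemma one_le_neg_pole:
  assumes "0 \<le> h" "N1 \<le> j"
  shows "1 \<le> - pole h N1 j"
  using assms by (simp add: neg_pole_eq mult_right_mono)

lemma r_t_eq_pole_sum:
  assumes "0 \<le> h"
  shows "r_t h N1 x = (\<Sum>j=1..Nt N1. pole_weight h N1 j * (x / (x - pole h N1 j)))"
  unfolding r_t_def sqrt_Nt_div_4 sum_distrib_left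
proof (rule sum.cong)
  fix j
  have denom: "exp (2 * sqrt (real j * h) - 2 * sqrt (real N1 * h)) + x = x - pole h N1 j"
    using neg_pole_eq[OF assms, of N1 j] by linarith
  show "x * h / pi * (1 / sqrt (real j * h) *
        (exp (sqrt (real j * h) - sqrt (real N1 * h)) /
         (exp (2 * sqrt (real j * h) - 2 * sqrt (real N1 * h)) + x))) =
      pole_weight h N1 j * (x / (x - pole h N1 j))"
    unfolding denom by (simp add: pole_weight_def ac_simps)
qed simp

lemma pole_weight_nonneg: "0 \<le> h \<Longrightarrow> 0 \<le> pole_weight h N1 j"
  by (simp add: pole_weight_def)

lemma pole_weight_le:
  assumes "0 < h" "1 \<le> j" "j \<le> Nt N1"
  shows "pole_weight h N1 j \<le> sqrt h * exp (sqrt (real N1 * h))"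
proof -
  have "sqrt h \<le> sqrt (real j * h)"
    using assms by simp
  also have "\<dots> \<le> pi * sqrt (real j * h)"
    using assms pi_ge_two by (intro mult_right_mono[of 1 pi, simplified]) simp_all
  finally have "h / (pi * sqrt (real j * h)) \<le> h / sqrt h"
    using assms by (intro divide_left_mono) simp_all
  then have "h / pi / sqrt (real j * h) \<le> h / sqrt h"
    by simp
  also have "\<dots> = sqrt h"
    using assms by (simp add: real_div_sqrt)
  finally have factor: "h / pi / sqrt (real j * h) \<le> sqrt h" .
  have "sqrt (real j * h) \<le> sqrt (4 * real N1 * h)"
    using assms by (simp add: Nt_def)
  also have "\<dots> = 2 * sqrt (real N1 * h)"
    by (simp add: real_sqrt_mult)
  finally have "exp (sqrt (real j * h) - sqrt (real N1 * h)) \<le> exp (sqrt (real N1 * h))"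
    by simp
  with factor show ?thesis
    unfolding pole_weight_def using assms by (intro mult_mono) simp_all
qed

definition poly_part :: "real \<Rightarrow> nat \<Rightarrow> nat \<Rightarrow> real poly" where
  "poly_part h N1 n = [:\<Sum>j=1..N1. pole_weight h N1 j:] +
     (\<Sum>j\<in>{N1<..Nt N1}. smult (pole_weight h N1 j) (frac_approx_poly (- pole h N1 j) n))"

lemma degree_poly_part: "degree (poly_part h N1 n) \<le> n"
  unfolding poly_part_def
proof (intro degree_add_le degree_sum_le)
  fix j
  have "1 + 2 * (- pole h N1 j) \<noteq> 0"
    using pole_less_0[of h N1 j] by simp
  then show "degree (smult (pole_weight h N1 j) (frac_approx_poly (- pole h N1 j) n)) \<le> n"
    by (intro order_trans[OF degree_smult_le] degree_frac_approx_poly)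
qed simp_all

lemma r_t_minus_r_approx:
  assumes "0 \<le> h" "0 \<le> x"
  shows "r_t h N1 x - r_approx h N1 (\<lambda>j. pole_weight h N1 j * pole h N1 j) (poly_part h N1 n) x =
    (\<Sum>j\<in>{N1<..Nt N1}. pole_weight h N1 j *
       (x / (x - pole h N1 j) - poly (frac_approx_poly (- pole h N1 j) n) x))"
proof -
  have near: "pole_weight h N1 j * (x / (x - pole h N1 j)) =
      pole_weight h N1 j * pole h N1 j / (x - pole h N1 j) + pole_weight h N1 j" for j
  proof -
    have "x - pole h N1 j \<noteq> 0"
      using pole_less_0[of h N1 j] assms by simp
    then show ?thesis by (simp add: field_simps)
  qed
  have split: "{1..Nt N1} = {1..N1} \<union> {N1<..Nt N1}"
    by (auto simp: Nt_def)
  have "r_t h N1 x = (\<Sum>j=1..N1. pole_weight h N1 j * (x / (x - pole h N1 j))) +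
      (\<Sum>j\<in>{N1<..Nt N1}. pole_weight h N1 j * (x / (x - pole h N1 j)))"
    unfolding r_t_eq_pole_sum[OF assms(1)] split by (rule sum.union_disjoint) auto
  also have "\<dots> = (\<Sum>j=1..N1. pole_weight h N1 j * pole h N1 j / (x - pole h N1 j)) +
      (\<Sum>j=1..N1. pole_weight h N1 j) +
      (\<Sum>j\<in>{N1<..Nt N1}. pole_weight h N1 j * (x / (x - pole h N1 j)))"
    by (simp only: near sum.distrib)
  finally show ?thesis
    by (simp add: r_approx_def poly_part_def poly_sum sum_subtractf right_diff_distrib)
qed

lemma r_t_minus_r_approx_bound:
  assumes "0 < h" "0 \<le> x" "x \<le> 1"
  shows "\<bar>r_t h N1 x - r_approx h N1 (\<lambda>j. pole_weight h N1 j * pole h N1 j) (poly_part h N1 n) x\<bar>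
    \<le> 3 * real N1 * sqrt h * exp (sqrt (real N1 * h) - real n)"
proof -
  have far: "\<bar>pole_weight h N1 j *
      (x / (x - pole h N1 j) - poly (frac_approx_poly (- pole h N1 j) n) x)\<bar>
    \<le> sqrt h * exp (sqrt (real N1 * h)) * exp (- real n)" if "j \<in> {N1<..Nt N1}" for j
  proof -
    have "\<bar>x / (x - pole h N1 j) - poly (frac_approx_poly (- pole h N1 j) n) x\<bar> \<le> exp (- real n)"
      using frac_approx_poly_error[OF one_le_neg_pole assms(2,3), of h N1 j n] that assms(1) by simp
    moreover have "pole_weight h N1 j \<le> sqrt h * exp (sqrt (real N1 * h))"
      using that assms(1) by (intro pole_weight_le) auto
    ultimately show ?thesis
      using pole_weight_nonneg[of h N1 j] assms(1) by (simp add: abs_mult mult_mono)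
  qed
  have "\<bar>r_t h N1 x - r_approx h N1 (\<lambda>j. pole_weight h N1 j * pole h N1 j) (poly_part h N1 n) x\<bar>
      \<le> (\<Sum>j\<in>{N1<..Nt N1}. sqrt h * exp (sqrt (real N1 * h)) * exp (- real n))"
    unfolding r_t_minus_r_approx[OF less_imp_le[OF assms(1)] assms(2)]
    by (rule order_trans[OF sum_abs sum_mono]) (rule far)
  also have "\<dots> = 3 * real N1 * sqrt h * exp (sqrt (real N1 * h) - real n)"
    by (simp add: Nt_def exp_diff exp_minus field_simps)
  finally show ?thesis .
qed

lemma of_nat_mult_exp_diff_le:
  fixes S m :: real
  assumes "2 * S + sqrt (real N) \<le> m"
  shows "real N * exp (S - m) \<le> 2 * exp (- S)"
proof -
  have "1 + sqrt (real N) + real N / 2 \<le> exp (sqrt (real N))"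
    using exp_lower_Taylor_quadratic[of "sqrt (real N)"] by simp
  then have "real N \<le> 2 * exp (sqrt (real N))"
    using real_sqrt_ge_zero[of "real N"] by linarith
  then have "real N * exp (- sqrt (real N)) \<le> 2"
    by (simp add: exp_minus field_simps)
  have "real N * exp (S - m) \<le> real N * (exp (- S) * exp (- sqrt (real N)))"
    using assms by (intro mult_left_mono) (simp_all add: exp_add[symmetric])
  also have "\<dots> = exp (- S) * (real N * exp (- sqrt (real N)))"
    by simp
  also have "\<dots> \<le> exp (- S) * 2"
    using \<open>real N * exp (- sqrt (real N)) \<le> 2\<close> by (intro mult_left_mono) simp_all
  finally show ?thesis by simp
qed

theorem lemma2p2:
  fixes h :: real
  assumes "h > 0"
  shows "\<exists>C1 C2 :: real. \<exists>N0 :: nat. \<forall>N1 \<ge> max 1 N0.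
           \<exists>(a :: nat \<Rightarrow> real) (b :: real poly).
             real (degree b) \<le> C2 * sqrt (real N1) \<and>
             (\<forall>x \<in> {0..1::real}.
                \<bar>r_t h N1 x - r_approx h N1 a b x\<bar>
                  \<le> C1 * exp (- sqrt (real (Nt N1) * h / 4)))"
proof (rule exI[of _ "6 * sqrt h"], rule exI[of _ "2 * sqrt h + 2"], rule exI[of _ 1], intro allI impI)
  fix N1 :: nat
  assume "max 1 1 \<le> N1"
  then have "1 \<le> sqrt (real N1)" by simp
  define S where "S = sqrt (real N1 * h)"
  define n where "n = nat \<lceil>2 * S + sqrt (real N1)\<rceil>"
  have "real (degree (poly_part h N1 n)) \<le> real n"
    using degree_poly_part[of h N1 n] by simp
  also have "\<dots> \<le> 2 * S + sqrt (real N1) + 1"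
    unfolding n_def S_def using assms by simp
  also have "\<dots> \<le> (2 * sqrt h + 2) * sqrt (real N1)"
    using \<open>1 \<le> sqrt (real N1)\<close> by (simp add: S_def real_sqrt_mult algebra_simps)
  finally have degree: "real (degree (poly_part h N1 n)) \<le> (2 * sqrt h + 2) * sqrt (real N1)" .
  have "2 * S + sqrt (real N1) \<le> real n"
    unfolding n_def by (rule real_nat_ceiling_ge)
  then have "3 * real N1 * sqrt h * exp (S - real n) \<le> 6 * sqrt h * exp (- S)"
    using of_nat_mult_exp_diff_le assms by (simp add: mult_left_mono)
  then have "\<forall>x\<in>{0..1}.
      \<bar>r_t h N1 x - r_approx h N1 (\<lambda>j. pole_weight h N1 j * pole h N1 j) (poly_part h N1 n) x\<bar>
        \<le> 6 * sqrt h * exp (- sqrt (real (Nt N1) * h / 4))"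
    using r_t_minus_r_approx_bound[OF assms, of _ N1 n] unfolding S_def sqrt_Nt_div_4 by fastforce
  with degree show "\<exists>a b. real (degree b) \<le> (2 * sqrt h + 2) * sqrt (real N1) \<and>
      (\<forall>x\<in>{0..1}. \<bar>r_t h N1 x - r_approx h N1 a b x\<bar>
        \<le> 6 * sqrt h * exp (- sqrt (real (Nt N1) * h / 4)))"
    by blast
qed

end
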